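(* In the setting described in the context, for any $w_N \in \mathcal V_N$ with coefficient tensor $W$ and the Galerkin solution $u_N \in \mathcal V_N$, \[ \|u_N - w_N\|_{\mathcal A_+} \leq (\check c_{\vartheta \rho}^+)^{-1}\, \eta_{\mathrm{disc}}(w_N). \]
   Context: Let $D\subset\mathbb R^d$ be a bounded Lipschitz domain, $\mathcal X=H^1_0(D)$, $f\in L^2(D)$. Let $\Gamma=\mathbb R^L$ ($L\ge M$), $\gamma=\bigotimes_{\ell=1}^L\gamma_\ell$ with $\gamma_\ell=N(0,1)$, and for given $\sigma_\ell\ge1$ let $\gamma_{\vartheta\rho}=\bigotimes_\ell N(0,\sigma_\ell^2)$. For $\mu\in\mathbb N_0^L$, $H_\mu(y)=\prod_\ell H_{\mu_\ell}(y_\ell)$ with $H_{n}(y_\ell)=h_{n}(y_\ell/\sigma_\ell)$, $h_n$ the normalized probabilists' Hermite polynomials (so $(H_\mu)$ is orthonormal in $L^2(\Gamma,\gamma_{\vartheta\rho})$). Let $\mathcal V_{\vartheta\rho}=L^2(\Gamma,\gamma_{\vartheta\rho};\mathcal X)$ and $\|v\|^2_{L^2(\Gamma,\gamma;\mathcal X)}=\int_\Gamma\|\nabla v(\cdot,y)\|^2_{L^2(D)}d\gamma(y)$. Let $a_{\Delta,s}:D\times\Gamma\to\mathbb R$ be a coefficient polynomial in $y$, $B(v,w)=\int_\Gamma\int_D a_{\Delta,s}\nabla v\cdot\nabla w\,dx\,d\gamma_{\vartheta\rho}$ (the bilinear form of $\mathcal A_+$), assumed bounded on $\mathcal V_{\vartheta\rho}$,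 with energy norm $\|v\|_{\mathcal A_+}=B(v,v)^{1/2}$ and coercivity constant $\check c^+_{\vartheta\rho}>0$ such that $\check c^+_{\vartheta\rho}\|v\|_{L^2(\Gamma,\gamma;\mathcal X)}\le\|v\|_{\mathcal A_+}$ for all $v\in\mathcal V_{\vartheta\rho}$. Let $\{\varphi_0,\dots,\varphi_{N-1}\}\subset\mathcal X$ be a finite element basis, $d_1,\dots,d_M\in\mathbb N$, $\Lambda=\{\mu\in\mathbb N_0^L:\mu_m<d_m\ (m\le M),\ \mu_\ell=0\ (\ell>M)\}$, and $\mathcal V_N=\mathrm{span}\{\varphi_iH_\mu\}$; elements $v_N=\sum_{i,\mu}V(i,\mu)\varphi_iH_\mu$ are identified with tensors $V\in\mathbb R^{N\times d_1\times\cdots\times d_M}$. The Galerkin solution $u_N\in\mathcal V_N$ (tensor $U$) satisfies $B(u_N,v)=\int_\Gamma\int_D fv\,dx\,d\gamma_{\vartheta\rho}$ for all $v\in\mathcal V_N$. For $w_N$ with tensor $W$ define $\mathbf A(W)(i,\mu)=B(w_N,\varphi_iH_\mu)$ and $F(i,\mu)=\int_\Gamma\int_D f\varphi_iH_\mu\,dx\,d\gamma_{\vartheta\rho}$. Let $\mathbf H_{\vartheta\rho\to0}=Z_0\otimes Z_1\otimes\cdots\otimes Z_M$ acting on $\mathbb R^{N\times d_1\times\cdots\times d_M}$, with $Z_0(i,j)=\int_D\nabla\varphi_i\cdot\nabla\varphi_j\,dx$ and $Z_m(\mu_m,\mu_m')=\int_{\mathbb R}H_{\mu_m}(y_m)H_{\mu_m'}(y_m)\,d\gamma_m(y_m)$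 (symmetric positive definite), and $\mathbf H_{\vartheta\rho\to0}^{-1/2}$ its inverse square root. The algebraic estimator is $\eta_{\mathrm{disc}}(w_N)=\|\mathbf H_{\vartheta\rho\to0}^{-1/2}(\mathbf A(W)-F)\|_{\ell^2}$ (Euclidean norm of the tensor). *)

theory Defs
  imports "HOL-Probability.Probability"
begin

fun hermite_prob :: "nat \<Rightarrow> real \<Rightarrow> real" where
  "hermite_prob 0 t = 1"
| "hermite_prob (Suc 0) t = t"
| "hermite_prob (Suc (Suc n)) t = t * hermite_prob (Suc n) t - real (Suc n) * hermite_prob n t"

definition hermite_norm :: "nat \<Rightarrow> real \<Rightarrow> real" where
  "hermite_norm n t = hermite_prob n t / sqrt (fact n)"

definition Hmu :: "(nat \<Rightarrow> real) \<Rightarrow> nat \<Rightarrow> (nat \<Rightarrow> nat) \<Rightarrow> (nat \<Rightarrow> real) \<Rightarrow> real" where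
  "Hmu \<sigma> L \<mu> y = (\<Prod>l<L. hermite_norm (\<mu> l) (y l / \<sigma> l))"

definition gauss_std :: "nat \<Rightarrow> (nat \<Rightarrow> real) measure" where
  "gauss_std L = PiM {..<L} (\<lambda>l. density lborel std_normal_density)"

definition gauss_sigma :: "(nat \<Rightarrow> real) \<Rightarrow> nat \<Rightarrow> (nat \<Rightarrow> real) measure" where
  "gauss_sigma \<sigma> L = PiM {..<L} (\<lambda>l. density lborel (normal_density 0 (\<sigma> l)))"

text \<open>Multi-index set Lambda (0-based: the first M coordinates 0..M-1 are active).\<close>

definition Lam :: "nat \<Rightarrow> (nat \<Rightarrow> nat) \<Rightarrow> (nat \<Rightarrow> nat) set" where
  "Lam M d = {\<mu>. \<forall>l. (l < M \<longrightarrow> \<mu> l < d l) \<and> (M \<le> l \<longrightarrow> \<mu> l = 0)}"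

definition Idx :: "nat \<Rightarrow> nat \<Rightarrow> (nat \<Rightarrow> nat) \<Rightarrow> (nat \<times> (nat \<Rightarrow> nat)) set" where
  "Idx N M d = {..<N} \<times> Lam M d"

definition fe_fun :: "nat \<Rightarrow> nat \<Rightarrow> (nat \<Rightarrow> nat) \<Rightarrow> (nat \<Rightarrow> real) \<Rightarrow> nat
    \<Rightarrow> (nat \<Rightarrow> 'd \<Rightarrow> real) \<Rightarrow> (nat \<times> (nat \<Rightarrow> nat) \<Rightarrow> real) \<Rightarrow> 'd \<Rightarrow> (nat \<Rightarrow> real) \<Rightarrow> real" where
  "fe_fun N M d \<sigma> L \<phi> V x y = (\<Sum>(i,\<mu>)\<in>Idx N M d. V (i,\<mu>) * \<phi> i x * Hmu \<sigma> L \<mu> y)"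

definition fe_grad :: "nat \<Rightarrow> nat \<Rightarrow> (nat \<Rightarrow> nat) \<Rightarrow> (nat \<Rightarrow> real) \<Rightarrow> nat
    \<Rightarrow> (nat \<Rightarrow> 'd \<Rightarrow> 'd::real_vector) \<Rightarrow> (nat \<times> (nat \<Rightarrow> nat) \<Rightarrow> real) \<Rightarrow> 'd \<Rightarrow> (nat \<Rightarrow> real) \<Rightarrow> 'd" where
  "fe_grad N M d \<sigma> L g\<phi> V x y = (\<Sum>(i,\<mu>)\<in>Idx N M d. (V (i,\<mu>) * Hmu \<sigma> L \<mu> y) *\<^sub>R g\<phi> i x)"

text \<open>Unit tensor e_p (coefficients of the basis function phi_i H_mu).\<close>

definition unit_tensor :: "nat \<times> (nat \<Rightarrow> nat) \<Rightarrow> nat \<times> (nat \<Rightarrow> nat) \<Rightarrow> real" where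
  "unit_tensor p = (\<lambda>q. if q = p then 1 else 0)"

text \<open>B(v,w) = int_Gamma int_D a grad v . grad w dx dgamma_sigma, written in terms of the
  x-gradients of v and w.\<close>

definition Bform :: "'d::euclidean_space set \<Rightarrow> ('d \<Rightarrow> (nat \<Rightarrow> real) \<Rightarrow> real) \<Rightarrow> (nat \<Rightarrow> real) measure
    \<Rightarrow> ('d \<Rightarrow> (nat \<Rightarrow> real) \<Rightarrow> 'd) \<Rightarrow> ('d \<Rightarrow> (nat \<Rightarrow> real) \<Rightarrow> 'd) \<Rightarrow> real" where
  "Bform D a G gv gw = (\<integral>y. (\<integral>x. a x y * (gv x y \<bullet> gw x y) \<partial>(lebesgue_on D)) \<partial>G)"

text \<open>Norm of L^2(Gamma, G; H^1_0(D)) (with the gradient norm on H^1_0(D)).\<close>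

definition L2X_norm :: "'d::euclidean_space set \<Rightarrow> (nat \<Rightarrow> real) measure
    \<Rightarrow> ('d \<Rightarrow> (nat \<Rightarrow> real) \<Rightarrow> 'd) \<Rightarrow> real" where
  "L2X_norm D G gv = sqrt (\<integral>y. (\<integral>x. (norm (gv x y))\<^sup>2 \<partial>(lebesgue_on D)) \<partial>G)"

definition rhs_int :: "'d::euclidean_space set \<Rightarrow> ('d \<Rightarrow> real) \<Rightarrow> (nat \<Rightarrow> real) measure
    \<Rightarrow> ('d \<Rightarrow> (nat \<Rightarrow> real) \<Rightarrow> real) \<Rightarrow> real" where
  "rhs_int D f G v = (\<integral>y. (\<integral>x. f x * v x y \<partial>(lebesgue_on D)) \<partial>G)"

text \<open>For Lipschitz domains the
  extension by zero characterises H^1_0(D).\<close>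

definition in_H10_with_grad :: "'d::euclidean_space set \<Rightarrow> ('d \<Rightarrow> real) \<Rightarrow> ('d \<Rightarrow> 'd) \<Rightarrow> bool" where
  "in_H10_with_grad D \<phi> g \<longleftrightarrow>
     \<phi> \<in> borel_measurable lborel \<and> g \<in> borel_measurable lborel \<and>
     (\<forall>x. x \<notin> D \<longrightarrow> \<phi> x = 0 \<and> g x = 0) \<and>
     integrable lborel (\<lambda>x. (\<phi> x)\<^sup>2) \<and> integrable lborel (\<lambda>x. (norm (g x))\<^sup>2) \<and>
     (\<forall>\<psi> D\<psi>. (\<forall>x. (\<psi> has_derivative (\<lambda>h. D\<psi> x \<bullet> h)) (at x)) \<and> continuous_on UNIV D\<psi> \<and>
                compact (closure {x. \<psi> x \<noteq> 0}) \<longrightarrow>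
        (\<forall>b\<in>Basis. (\<integral>x. \<phi> x * (D\<psi> x \<bullet> b) \<partial>lborel) = - (\<integral>x. (g x \<bullet> b) * \<psi> x \<partial>lborel)))"

definition Z0 :: "'d::euclidean_space set \<Rightarrow> (nat \<Rightarrow> 'd \<Rightarrow> 'd) \<Rightarrow> nat \<Rightarrow> nat \<Rightarrow> real" where
  "Z0 D g\<phi> i j = (\<integral>x. g\<phi> i x \<bullet> g\<phi> j x \<partial>(lebesgue_on D))"

definition Zm :: "(nat \<Rightarrow> real) \<Rightarrow> nat \<Rightarrow> nat \<Rightarrow> nat \<Rightarrow> real" where
  "Zm \<sigma> m k k' = (\<integral>t. hermite_norm k (t / \<sigma> m) * hermite_norm k' (t / \<sigma> m)
                      \<partial>(density lborel std_normal_density))"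

text \<open>Kernel of H = Z_0 (x) Z_1 (x) ... (x) Z_M on the index set Idx (coordinates 0..M-1).\<close>

definition Hker :: "'d::euclidean_space set \<Rightarrow> (nat \<Rightarrow> 'd \<Rightarrow> 'd) \<Rightarrow> (nat \<Rightarrow> real) \<Rightarrow> nat
    \<Rightarrow> nat \<times> (nat \<Rightarrow> nat) \<Rightarrow> nat \<times> (nat \<Rightarrow> nat) \<Rightarrow> real" where
  "Hker D g\<phi> \<sigma> M p q = Z0 D g\<phi> (fst p) (fst q) * (\<Prod>m<M. Zm \<sigma> m (snd p m) (snd q m))"

definition is_inv_sqrt :: "'i set \<Rightarrow> ('i \<Rightarrow> 'i \<Rightarrow> real) \<Rightarrow> ('i \<Rightarrow> 'i \<Rightarrow> real) \<Rightarrow> bool" where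
  "is_inv_sqrt I K S \<longleftrightarrow>
     (\<forall>p\<in>I. \<forall>q\<in>I. S p q = S q p) \<and>
     (\<forall>V. (\<exists>p\<in>I. V p \<noteq> 0) \<longrightarrow> (\<Sum>p\<in>I. \<Sum>q\<in>I. V p * S p q * V q) > 0) \<and>
     (\<forall>p\<in>I. \<forall>r\<in>I. (\<Sum>q\<in>I. \<Sum>s\<in>I. S p q * S q s * K s r) = (if p = r then 1 else 0))"

definition apply_norm :: "'i set \<Rightarrow> ('i \<Rightarrow> 'i \<Rightarrow> real) \<Rightarrow> ('i \<Rightarrow> real) \<Rightarrow> real" where
  "apply_norm I S R = sqrt (\<Sum>p\<in>I. (\<Sum>q\<in>I. S p q * R q)\<^sup>2)"

definition poly_in_y :: "nat \<Rightarrow> ('d::euclidean_space \<Rightarrow> (nat \<Rightarrow> real) \<Rightarrow> real) \<Rightarrow> bool" where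
  "poly_in_y L a \<longleftrightarrow> (\<exists>K c. finite K \<and> (\<forall>\<nu>\<in>K. c \<nu> \<in> borel_measurable lborel) \<and>
       (\<forall>x y. a x y = (\<Sum>\<nu>\<in>K. c \<nu> x * (\<Prod>l<L. (y l) ^ (\<nu> l)))))"

end

theory Submission
  imports Defs "HOL-Computational_Algebra.Polynomial"
begin

text \<open>In the tensor basis \<open>\<phi>\<^sub>i H\<^sub>\<mu>\<close> the bilinear form is given by its stiffness matrix \<open>A\<close>,
  and the squared \<open>L\<^sup>2(\<Gamma>,\<gamma>;\<X>)\<close> norm by the quadratic form of \<open>H = Z\<^sub>0 \<otimes> \<dots> \<otimes> Z\<^sub>M\<close>: the
  scaled Hermite polynomials are orthonormal for \<open>\<gamma>\<^sub>\<vartheta>\<^sub>\<rho>\<close> but not for \<open>\<gamma>\<close>, whence the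
  Gram matrices \<open>Z\<^sub>m\<close>.  For \<open>E = U - W\<close>, Galerkin orthogonality turns the residual
  \<open>R = A W - F\<close> into \<open>-A E\<close>, so \<open>\<parallel>u\<^sub>N - w\<^sub>N\<parallel>\<^sub>A\<^sup>2 = -\<langle>E, R\<rangle>\<close>.  Since
  \<open>\<langle>E, R\<rangle> = \<langle>H\<^sup>1\<^sup>/\<^sup>2 E, H\<^sup>-\<^sup>1\<^sup>/\<^sup>2 R\<rangle>\<close>, Cauchy-Schwarz and coercivity give
  \<open>\<parallel>u\<^sub>N - w\<^sub>N\<parallel>\<^sub>A\<^sup>2 \<le> (E\<^sup>T H E)\<^sup>1\<^sup>/\<^sup>2 \<eta> \<le> \<parallel>u\<^sub>N - w\<^sub>N\<parallel>\<^sub>A \<eta> / c\<close>.\<close>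

section \<open>Gaussian integrals of Hermite products\<close>

fun hermite_prob_poly :: "nat \<Rightarrow> real poly" where
  "hermite_prob_poly 0 = 1"
| "hermite_prob_poly (Suc 0) = [:0, 1:]"
| "hermite_prob_poly (Suc (Suc n)) =
     [:0, 1:] * hermite_prob_poly (Suc n) - smult (real (Suc n)) (hermite_prob_poly n)"

lemma poly_hermite_prob_poly: "poly (hermite_prob_poly n) t = hermite_prob n t"
  by (induction n rule: hermite_prob_poly.induct) auto

lemma hermite_norm_scaled_is_poly: "\<exists>Q. \<forall>t. hermite_norm k (t / s) = poly Q t"
proof -
  have "hermite_norm k (t / s)
      = poly (smult (1 / sqrt (fact k)) (pcompose (hermite_prob_poly k) [:0, 1 / s:])) t" for t
    by (simp add: hermite_norm_def poly_pcompose poly_hermite_prob_poly)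
  then show ?thesis by blast
qed

lemma hermite_norm_0 [simp]: "hermite_norm 0 t = 1"
  by (simp add: hermite_norm_def)

lemma integrable_std_normal_poly: "integrable std_normal_distribution (poly Q)"
  unfolding poly_altdef
  by (auto intro!: integrable_sum integrable_mult_right integrable_std_normal_distribution_moment)

lemma integrable_std_normal_hermite_norm_mult:
  "integrable std_normal_distribution (\<lambda>t. hermite_norm k (t / s) * hermite_norm k' (t / s))"
proof -
  obtain Q1 where "\<And>t. hermite_norm k (t / s) = poly Q1 t"
    using hermite_norm_scaled_is_poly by blast
  moreover obtain Q2 where "\<And>t. hermite_norm k' (t / s) = poly Q2 t"
    using hermite_norm_scaled_is_poly by blast
  ultimately show ?thesis
    by (simp flip: poly_mult add: integrable_std_normal_poly)
qed

lemma product_sigma_finite_std_normal: "product_sigma_finite (\<lambda>_. std_normal_distribution)"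
  unfolding product_sigma_finite_def
  using prob_space_imp_sigma_finite[OF prob_space_normal_density, of 1 0] by auto

lemma Hmu_mult_eq_prod:
  "Hmu \<sigma> L \<mu> y * Hmu \<sigma> L \<mu>' y
     = (\<Prod>l<L. hermite_norm (\<mu> l) (y l / \<sigma> l) * hermite_norm (\<mu>' l) (y l / \<sigma> l))"
  unfolding Hmu_def by (simp add: prod.distrib)

lemma integrable_gauss_std_Hmu_mult:
  "integrable (gauss_std L) (\<lambda>y. Hmu \<sigma> L \<mu> y * Hmu \<sigma> L \<mu>' y)"
  unfolding Hmu_mult_eq_prod gauss_std_def
  by (rule product_sigma_finite.product_integrable_prod[OF product_sigma_finite_std_normal])
     (auto intro: integrable_std_normal_hermite_norm_mult)

lemma integral_gauss_std_Hmu_mult: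
  assumes "M \<le> L" and "\<And>l. M \<le> l \<Longrightarrow> \<mu> l = 0" and "\<And>l. M \<le> l \<Longrightarrow> \<mu>' l = 0"
  shows "(\<integral>y. Hmu \<sigma> L \<mu> y * Hmu \<sigma> L \<mu>' y \<partial>gauss_std L) = (\<Prod>m<M. Zm \<sigma> m (\<mu> m) (\<mu>' m))"
proof -
  let ?h = "\<lambda>l. \<integral>t. hermite_norm (\<mu> l) (t / \<sigma> l) * hermite_norm (\<mu>' l) (t / \<sigma> l)
                  \<partial>std_normal_distribution"
  have "(\<integral>y. Hmu \<sigma> L \<mu> y * Hmu \<sigma> L \<mu>' y \<partial>gauss_std L) = (\<Prod>l<L. ?h l)"
    unfolding Hmu_mult_eq_prod gauss_std_def
    by (rule product_sigma_finite.product_integral_prod[OF product_sigma_finite_std_normal])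
       (auto intro: integrable_std_normal_hermite_norm_mult)
  also have "\<dots> = (\<Prod>l<M. ?h l)"
  proof (rule prod.mono_neutral_right)
    show "\<forall>l\<in>{..<L} - {..<M}. ?h l = 1"
      using assms(2,3) prob_space.prob_space[OF prob_space_normal_density, of 1 0] by simp
  qed (use assms(1) in auto)
  also have "\<dots> = (\<Prod>m<M. Zm \<sigma> m (\<mu> m) (\<mu>' m))"
    by (simp add: Zm_def)
  finally show ?thesis .
qed

section \<open>Expansion in the tensor basis\<close>

lemma finite_Lam: "finite (Lam M d)"
proof -
  have "inj_on (\<lambda>\<mu>. restrict \<mu> {..<M}) (Lam M d)"
    by (auto simp: inj_on_def Lam_def fun_eq_iff restrict_def) (metis not_le)
  moreover have "(\<lambda>\<mu>. restrict \<mu> {..<M}) ` Lam M d \<subseteq> (\<Pi>\<^sub>E l\<in>{..<M}. {..<d l})"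
    by (rule image_subsetI) (simp add: restrict_PiE_iff Lam_def)
  ultimately show ?thesis
    by (meson finite_PiE finite_lessThan finite_subset finite_imageD)
qed

lemma finite_Idx: "finite (Idx N M d)"
  unfolding Idx_def using finite_Lam by auto

lemma inner_fe_grad:
  "fe_grad N M d \<sigma> L g\<phi> V x y \<bullet> fe_grad N M d \<sigma> L g\<phi> V' x y =
    (\<Sum>p\<in>Idx N M d. \<Sum>q\<in>Idx N M d. V p * V' q *
        ((g\<phi> (fst p) x \<bullet> g\<phi> (fst q) x) * Hmu \<sigma> L (snd p) y * Hmu \<sigma> L (snd q) y))"
  unfolding fe_grad_def case_prod_beta inner_sum_left inner_sum_right
  by (subst sum.swap) (simp add: mult_ac)

lemma integrable_inner_H10_grad:
  assumes "in_H10_with_grad D \<phi>1 g1" and "in_H10_with_grad D \<phi>2 g2" and "D \<in> sets lebesgue"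
  shows "integrable (lebesgue_on D) (\<lambda>x. g1 x \<bullet> g2 x)"
proof -
  have meas: "(\<lambda>x. g1 x \<bullet> g2 x) \<in> borel_measurable lborel"
    using assms(1,2) by (auto simp: in_H10_with_grad_def)
  have sq_int: "integrable lborel (\<lambda>x. (norm (g1 x))\<^sup>2 + (norm (g2 x))\<^sup>2)"
    using assms(1,2) by (auto simp: in_H10_with_grad_def)
  have "norm (g1 x \<bullet> g2 x) \<le> norm ((norm (g1 x))\<^sup>2 + (norm (g2 x))\<^sup>2)" for x
  proof -
    have "\<bar>g1 x \<bullet> g2 x\<bar> \<le> norm (g1 x) * norm (g2 x)"
      by (rule Cauchy_Schwarz_ineq2)
    moreover have "2 * norm (g1 x) * norm (g2 x) \<le> (norm (g1 x))\<^sup>2 + (norm (g2 x))\<^sup>2"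
      by (rule sum_squares_bound)
    moreover have "0 \<le> norm (g1 x) * norm (g2 x)"
      by simp
    ultimately show ?thesis
      by simp
  qed
  then have "integrable lborel (\<lambda>x. g1 x \<bullet> g2 x)"
    by (intro Bochner_Integration.integrable_bound[OF sq_int meas] AE_I2)
  then have "integrable lebesgue (\<lambda>x. g1 x \<bullet> g2 x)"
    using integrable_completion[OF meas] by simp
  then have "integrable lebesgue (\<lambda>x. indicator D x *\<^sub>R (g1 x \<bullet> g2 x))"
    by (rule integrable_mult_indicator[OF assms(3)])
  then show ?thesis
    using assms(3) by (simp add: integrable_restrict_space)
qed

lemma L2X_norm_gauss_std_fe_grad:
  assumes "\<And>i j. i < N \<Longrightarrow> j < N \<Longrightarrow> integrable (lebesgue_on D) (\<lambda>x. g\<phi> i x \<bullet> g\<phi> j x)"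
    and "M \<le> L"
  shows "L2X_norm D (gauss_std L) (fe_grad N M d \<sigma> L g\<phi> V)
       = sqrt (\<Sum>p\<in>Idx N M d. \<Sum>q\<in>Idx N M d. V p * Hker D g\<phi> \<sigma> M p q * V q)"
proof -
  let ?I = "Idx N M d"
  let ?HH = "\<lambda>p q y. Hmu \<sigma> L (snd p) y * Hmu \<sigma> L (snd q) y"
  have inner: "(\<integral>x. (norm (fe_grad N M d \<sigma> L g\<phi> V x y))\<^sup>2 \<partial>lebesgue_on D)
     = (\<Sum>p\<in>?I. \<Sum>q\<in>?I. (V p * V q * Z0 D g\<phi> (fst p) (fst q)) * ?HH p q y)" for y
  proof -
    have "(\<lambda>x. (norm (fe_grad N M d \<sigma> L g\<phi> V x y))\<^sup>2) =
       (\<lambda>x. \<Sum>p\<in>?I. \<Sum>q\<in>?I. (V p * V q * ?HH p q y) * (g\<phi> (fst p) x \<bullet> g\<phi> (fst q) x))"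
      unfolding power2_norm_eq_inner inner_fe_grad by (simp add: mult_ac)
    moreover have "integrable (lebesgue_on D) (\<lambda>x. g\<phi> (fst p) x \<bullet> g\<phi> (fst q) x)"
      if "p \<in> ?I" "q \<in> ?I" for p q
      using assms(1) that by (auto simp: Idx_def)
    ultimately show ?thesis
      by (simp add: integral_sum integrable_sum Z0_def mult_ac)
  qed
  have "(\<integral>y. (\<integral>x. (norm (fe_grad N M d \<sigma> L g\<phi> V x y))\<^sup>2 \<partial>lebesgue_on D) \<partial>gauss_std L)
     = (\<Sum>p\<in>?I. \<Sum>q\<in>?I. (V p * V q * Z0 D g\<phi> (fst p) (fst q)) * (\<integral>y. ?HH p q y \<partial>gauss_std L))"
    unfolding inner by (simp add: integral_sum integrable_sum integrable_gauss_std_Hmu_mult)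
  also have "\<dots> = (\<Sum>p\<in>?I. \<Sum>q\<in>?I. V p * Hker D g\<phi> \<sigma> M p q * V q)"
  proof (intro sum.cong refl)
    fix p q assume "p \<in> ?I" "q \<in> ?I"
    then have "(\<integral>y. ?HH p q y \<partial>gauss_std L) = (\<Prod>m<M. Zm \<sigma> m (snd p m) (snd q m))"
      by (intro integral_gauss_std_Hmu_mult[OF assms(2)]) (auto simp: Idx_def Lam_def)
    then show "V p * V q * Z0 D g\<phi> (fst p) (fst q) * (\<integral>y. ?HH p q y \<partial>gauss_std L)
        = V p * Hker D g\<phi> \<sigma> M p q * V q"
      by (simp add: Hker_def)
  qed
  finally show ?thesis
    by (simp add: L2X_norm_def)
qed

lemma integral_iterated_sum:
  fixes k :: "'j \<Rightarrow> 'x \<Rightarrow> 'y \<Rightarrow> real"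
  assumes "finite J" and "sigma_finite_measure M1" and "sigma_finite_measure M2"
    and "\<And>j. j \<in> J \<Longrightarrow> integrable (M1 \<Otimes>\<^sub>M M2) (\<lambda>(x, y). k j x y)"
  shows "(\<integral>y. (\<integral>x. (\<Sum>j\<in>J. k j x y) \<partial>M1) \<partial>M2) = (\<Sum>j\<in>J. \<integral>y. (\<integral>x. k j x y \<partial>M1) \<partial>M2)"
proof -
  interpret pair_sigma_finite M1 M2
    using assms(2,3) by (simp add: pair_sigma_finite_def)
  have "integrable (M1 \<Otimes>\<^sub>M M2) (\<lambda>z. \<Sum>j\<in>J. (\<lambda>(x, y). k j x y) z)"
    by (intro Bochner_Integration.integrable_sum assms(4))
  then have "(\<integral>y. (\<integral>x. (\<Sum>j\<in>J. k j x y) \<partial>M1) \<partial>M2)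
      = (\<integral>z. (\<Sum>j\<in>J. (\<lambda>(x, y). k j x y) z) \<partial>(M1 \<Otimes>\<^sub>M M2))"
    using integral_snd[of "\<lambda>x y. \<Sum>j\<in>J. k j x y"] by (simp add: case_prod_beta')
  also have "\<dots> = (\<Sum>j\<in>J. \<integral>z. (\<lambda>(x, y). k j x y) z \<partial>(M1 \<Otimes>\<^sub>M M2))"
    by (intro Bochner_Integration.integral_sum assms(4))
  also have "\<dots> = (\<Sum>j\<in>J. \<integral>y. (\<integral>x. k j x y \<partial>M1) \<partial>M2)"
    using assms(4) by (simp add: integral_snd)
  finally show ?thesis .
qed

lemma Bform_fe_grad_expansion:
  assumes "sigma_finite_measure (lebesgue_on D)" and "sigma_finite_measure G"
    and "\<And>p q. p \<in> Idx N M d \<Longrightarrow> q \<in> Idx N M d \<Longrightarrow> integrable (lebesgue_on D \<Otimes>\<^sub>M G)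
          (\<lambda>(x, y). a x y * (g\<phi> (fst p) x \<bullet> g\<phi> (fst q) x) * Hmu \<sigma> L (snd p) y * Hmu \<sigma> L (snd q) y)"
  shows "Bform D a G (fe_grad N M d \<sigma> L g\<phi> V) (fe_grad N M d \<sigma> L g\<phi> V')
     = (\<Sum>p\<in>Idx N M d. \<Sum>q\<in>Idx N M d. V p * V' q *
          Bform D a G (fe_grad N M d \<sigma> L g\<phi> (unit_tensor p)) (fe_grad N M d \<sigma> L g\<phi> (unit_tensor q)))"
proof -
  let ?I = "Idx N M d"
  let ?B = "\<lambda>V V'. Bform D a G (fe_grad N M d \<sigma> L g\<phi> V) (fe_grad N M d \<sigma> L g\<phi> V')"
  define k where "k j x y = a x y * (g\<phi> (fst (fst j)) x \<bullet> g\<phi> (fst (snd j)) x)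
      * Hmu \<sigma> L (snd (fst j)) y * Hmu \<sigma> L (snd (snd j)) y" for j x y
  define b where "b j = (\<integral>y. (\<integral>x. k j x y \<partial>lebesgue_on D) \<partial>G)" for j
  have expand: "?B V V' = (\<Sum>j\<in>?I \<times> ?I. V (fst j) * V' (snd j) * b j)" for V V'
  proof -
    have "?B V V'
        = (\<integral>y. (\<integral>x. (\<Sum>j\<in>?I \<times> ?I. V (fst j) * V' (snd j) * k j x y) \<partial>lebesgue_on D) \<partial>G)"
      unfolding Bform_def inner_fe_grad sum_distrib_left sum.cartesian_product k_def
      by (simp add: case_prod_beta mult_ac)
    also have "\<dots>
        = (\<Sum>j\<in>?I \<times> ?I. \<integral>y. (\<integral>x. V (fst j) * V' (snd j) * k j x y \<partial>lebesgue_on D) \<partial>G)"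
    proof (rule integral_iterated_sum[OF _ assms(1,2)])
      fix j assume "j \<in> ?I \<times> ?I"
      then have "integrable (lebesgue_on D \<Otimes>\<^sub>M G) (\<lambda>(x, y). k j x y)"
        using assms(3)[of "fst j" "snd j"] by (auto simp: k_def case_prod_beta)
      then show "integrable (lebesgue_on D \<Otimes>\<^sub>M G) (\<lambda>(x, y). V (fst j) * V' (snd j) * k j x y)"
        using Bochner_Integration.integrable_mult_right[of "V (fst j) * V' (snd j)"]
        by (simp add: case_prod_beta')
    qed (simp add: finite_Idx)
    also have "\<dots> = (\<Sum>j\<in>?I \<times> ?I. V (fst j) * V' (snd j) * b j)"
      by (simp add: b_def)
    finally show ?thesis .
  qed
  have b_unit: "b (p, q) = ?B (unit_tensor p) (unit_tensor q)" if "p \<in> ?I" "q \<in> ?I" for p q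
  proof -
    have "?B (unit_tensor p) (unit_tensor q) = (\<Sum>j\<in>?I \<times> ?I. if j = (p, q) then b j else 0)"
      unfolding expand by (intro sum.cong refl) (auto simp: unit_tensor_def)
    then show ?thesis
      using that by (simp add: finite_Idx)
  qed
  show ?thesis
    unfolding expand[of V V'] sum.cartesian_product by (auto intro!: sum.cong simp: b_unit)
qed

section \<open>Galerkin error and the algebraic residual\<close>

definition mat_vec :: "'i set \<Rightarrow> ('i \<Rightarrow> 'i \<Rightarrow> real) \<Rightarrow> ('i \<Rightarrow> real) \<Rightarrow> 'i \<Rightarrow> real" where
  "mat_vec I A v p = (\<Sum>q\<in>I. A p q * v q)"

lemma sum_mult_mat_vec_symmetric:
  assumes "\<forall>p\<in>I. \<forall>q\<in>I. A p q = A q p"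
  shows "(\<Sum>p\<in>I. u p * mat_vec I A v p) = (\<Sum>p\<in>I. mat_vec I A u p * v p)"
proof -
  have "(\<Sum>p\<in>I. u p * mat_vec I A v p) = (\<Sum>p\<in>I. \<Sum>q\<in>I. u p * A p q * v q)"
    by (simp add: mat_vec_def sum_distrib_left mult.assoc)
  also have "\<dots> = (\<Sum>q\<in>I. \<Sum>p\<in>I. u p * A p q * v q)"
    by (rule sum.swap)
  also have "\<dots> = (\<Sum>q\<in>I. \<Sum>p\<in>I. A q p * u p * v q)"
    using assms by (intro sum.cong refl) (auto simp: mult.commute)
  also have "\<dots> = (\<Sum>p\<in>I. mat_vec I A u p * v p)"
    by (simp add: mat_vec_def sum_distrib_right)
  finally show ?thesis .
qed

lemma mat_vec_triple_product_id:
  assumes "finite I" and "p \<in> I"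
    and "\<forall>p\<in>I. \<forall>r\<in>I. (\<Sum>q\<in>I. \<Sum>s\<in>I. A p q * B q s * C s r) = (if p = r then 1 else 0)"
  shows "mat_vec I A (mat_vec I B (mat_vec I C v)) p = v p"
proof -
  have "mat_vec I A (mat_vec I B (mat_vec I C v)) p
      = (\<Sum>q\<in>I. \<Sum>s\<in>I. \<Sum>r\<in>I. A p q * B q s * C s r * v r)"
    by (simp add: mat_vec_def sum_distrib_left mult.assoc)
  also have "\<dots> = (\<Sum>q\<in>I. \<Sum>r\<in>I. \<Sum>s\<in>I. A p q * B q s * C s r * v r)"
    by (intro sum.cong refl sum.swap)
  also have "\<dots> = (\<Sum>r\<in>I. \<Sum>q\<in>I. \<Sum>s\<in>I. A p q * B q s * C s r * v r)"
    by (rule sum.swap)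
  also have "\<dots> = (\<Sum>r\<in>I. (\<Sum>q\<in>I. \<Sum>s\<in>I. A p q * B q s * C s r) * v r)"
    by (simp add: sum_distrib_right)
  also have "\<dots> = (\<Sum>r\<in>I. if p = r then v r else 0)"
    using assms(2,3) by (intro sum.cong refl) auto
  also have "\<dots> = v p"
    using assms(1,2) by simp
  finally show ?thesis .
qed

lemma triple_product_id_transpose:
  fixes A B C :: "'i \<Rightarrow> 'i \<Rightarrow> real"
  assumes "\<forall>p\<in>I. \<forall>q\<in>I. A p q = A q p" and "\<forall>p\<in>I. \<forall>q\<in>I. B p q = B q p"
    and "\<forall>p\<in>I. \<forall>q\<in>I. C p q = C q p"
    and "\<forall>p\<in>I. \<forall>r\<in>I. (\<Sum>q\<in>I. \<Sum>s\<in>I. A p q * B q s * C s r) = (if p = r then 1 else 0)"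
  shows "\<forall>p\<in>I. \<forall>r\<in>I. (\<Sum>q\<in>I. \<Sum>s\<in>I. C p q * B q s * A s r) = (if p = r then 1 else 0)"
proof (intro ballI)
  fix p r assume p: "p \<in> I" and r: "r \<in> I"
  have "(\<Sum>q\<in>I. \<Sum>s\<in>I. C p q * B q s * A s r) = (\<Sum>s\<in>I. \<Sum>q\<in>I. C p q * B q s * A s r)"
    by (rule sum.swap)
  also have "\<dots> = (\<Sum>s\<in>I. \<Sum>q\<in>I. A r s * B s q * C q p)"
  proof (intro sum.cong refl)
    fix s q assume "s \<in> I" "q \<in> I"
    then have "C p q = C q p" "B q s = B s q" "A s r = A r s"
      using assms(1-3) p r by auto
    then show "C p q * B q s * A s r = A r s * B s q * C q p"
      by (simp add: mult_ac)
  qed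
  also have "\<dots> = (if p = r then 1 else 0)"
    using assms(4) p r by auto
  finally show "(\<Sum>q\<in>I. \<Sum>s\<in>I. C p q * B q s * A s r) = (if p = r then 1 else 0)" .
qed

lemma inv_sqrt_Cauchy_Schwarz:
  assumes "finite I" and "is_inv_sqrt I K S" and symK: "\<forall>p\<in>I. \<forall>q\<in>I. K p q = K q p"
  shows "(\<Sum>p\<in>I. E p * R p)\<^sup>2 \<le> (\<Sum>p\<in>I. \<Sum>q\<in>I. E p * K p q * E q) * (apply_norm I S R)\<^sup>2"
proof -
  have symS: "\<forall>p\<in>I. \<forall>q\<in>I. S p q = S q p"
    and SSK: "\<forall>p\<in>I. \<forall>r\<in>I. (\<Sum>q\<in>I. \<Sum>s\<in>I. S p q * S q s * K s r) = (if p = r then 1 else 0)"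
    using assms(2) by (auto simp: is_inv_sqrt_def)
  note KSS = triple_product_id_transpose[OF symS symS symK SSK]
  define x where "x = mat_vec I S R"
  define y where "y = mat_vec I S (mat_vec I K E)"
  have "(\<Sum>p\<in>I. E p * R p) = (\<Sum>p\<in>I. E p * mat_vec I K (mat_vec I S x) p)"
    unfolding x_def using assms(1) KSS by (intro sum.cong refl) (simp add: mat_vec_triple_product_id)
  also have "\<dots> = (\<Sum>p\<in>I. mat_vec I K E p * mat_vec I S x p)"
    using symK by (rule sum_mult_mat_vec_symmetric)
  also have "\<dots> = (\<Sum>p\<in>I. y p * x p)"
    unfolding y_def using symS by (rule sum_mult_mat_vec_symmetric)
  finally have ER: "(\<Sum>p\<in>I. E p * R p) = (\<Sum>p\<in>I. y p * x p)" .
  have "(\<Sum>p\<in>I. (y p)\<^sup>2) = (\<Sum>p\<in>I. mat_vec I K E p * mat_vec I S (mat_vec I S (mat_vec I K E)) p)"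
    unfolding y_def power2_eq_square using symS by (rule sum_mult_mat_vec_symmetric[symmetric])
  also have "\<dots> = (\<Sum>p\<in>I. mat_vec I K E p * E p)"
    using assms(1) SSK by (intro sum.cong refl) (simp add: mat_vec_triple_product_id)
  also have "\<dots> = (\<Sum>p\<in>I. \<Sum>q\<in>I. E p * K p q * E q)"
    by (simp add: mat_vec_def sum_distrib_left sum_distrib_right mult_ac)
  finally have yy: "(\<Sum>p\<in>I. (y p)\<^sup>2) = (\<Sum>p\<in>I. \<Sum>q\<in>I. E p * K p q * E q)" .
  have xx: "(apply_norm I S R)\<^sup>2 = (\<Sum>p\<in>I. (x p)\<^sup>2)"
    by (simp add: apply_norm_def x_def mat_vec_def sum_nonneg)
  show ?thesis
    using Cauchy_Schwarz_ineq_sum[of y x I] by (simp only: ER yy xx)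
qed

lemma galerkin_energy_error_eq_residual:
  fixes B :: "('i \<Rightarrow> real) \<Rightarrow> ('i \<Rightarrow> real) \<Rightarrow> real"
  assumes "finite I"
    and expand: "\<And>V V'. B V V' = (\<Sum>p\<in>I. \<Sum>q\<in>I. V p * V' q * A p q)"
    and galerkin: "\<And>r. r \<in> I \<Longrightarrow> B U (\<lambda>q. if q = r then 1 else 0) = F r"
  shows "B (\<lambda>p. U p - W p) (\<lambda>p. U p - W p)
       = - (\<Sum>r\<in>I. (U r - W r) * (B W (\<lambda>q. if q = r then 1 else 0) - F r))"
proof -
  have unit: "B V (\<lambda>q. if q = r then 1 else 0) = (\<Sum>p\<in>I. V p * A p r)" if "r \<in> I" for V r
  proof -
    have "V p * (if q = r then 1 else 0) * A p q = (if q = r then V p * A p r else 0)" for p q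
      by simp
    then show ?thesis
      unfolding expand using assms(1) that by simp
  qed
  have residual: "B W (\<lambda>q. if q = r then 1 else 0) - F r = - (\<Sum>p\<in>I. (U p - W p) * A p r)"
    if "r \<in> I" for r
    using that by (simp add: unit galerkin[symmetric] sum_subtractf left_diff_distrib)
  have "B (\<lambda>p. U p - W p) (\<lambda>p. U p - W p) = (\<Sum>r\<in>I. (U r - W r) * (\<Sum>p\<in>I. (U p - W p) * A p r))"
    unfolding expand by (subst sum.swap) (simp add: sum_distrib_left mult_ac)
  also have "\<dots> = - (\<Sum>r\<in>I. (U r - W r) * (B W (\<lambda>q. if q = r then 1 else 0) - F r))"
    by (simp add: residual sum_negf)
  finally show ?thesis .
qed

lemma sqrt_le_div_of_le_mult:
  fixes X q Y c :: real
  assumes "X \<le> q * Y" and "c * q \<le> sqrt X" and "0 < c" and "0 \<le> Y"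
  shows "sqrt X \<le> Y / c"
proof (cases "X > 0")
  case True
  have "sqrt X * sqrt X = X"
    using True by simp
  also have "\<dots> \<le> q * Y"
    by (fact assms(1))
  also have "\<dots> \<le> sqrt X / c * Y"
    using assms(2-4) by (intro mult_right_mono) (simp_all add: field_simps)
  also have "\<dots> = sqrt X * (Y / c)"
    by simp
  finally show ?thesis
    by (rule mult_left_le_imp_le) (use True in simp)
next
  case False
  then show ?thesis
    using assms(3,4) by (simp add: order_trans[of _ 0])
qed

theorem galerkin_energy_error_le_residual_norm:
  fixes B :: "('i \<Rightarrow> real) \<Rightarrow> ('i \<Rightarrow> real) \<Rightarrow> real"
  assumes "finite I"
    and expand: "\<And>V V'. B V V' = (\<Sum>p\<in>I. \<Sum>q\<in>I. V p * V' q * A p q)"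
    and galerkin: "\<And>r. r \<in> I \<Longrightarrow> B U (\<lambda>q. if q = r then 1 else 0) = F r"
    and S: "is_inv_sqrt I K S" and symK: "\<forall>p\<in>I. \<forall>q\<in>I. K p q = K q p"
    and "0 < c"
    and coercive: "c * sqrt (\<Sum>p\<in>I. \<Sum>q\<in>I. (U p - W p) * K p q * (U q - W q))
                     \<le> sqrt (B (\<lambda>p. U p - W p) (\<lambda>p. U p - W p))"
  shows "sqrt (B (\<lambda>p. U p - W p) (\<lambda>p. U p - W p))
           \<le> (1 / c) * apply_norm I S (\<lambda>p. B W (\<lambda>q. if q = p then 1 else 0) - F p)"
proof -
  define E where "E = (\<lambda>p. U p - W p)"
  define R where "R = (\<lambda>p. B W (\<lambda>q. if q = p then 1 else 0) - F p)"
  let ?Q = "\<Sum>p\<in>I. \<Sum>q\<in>I. E p * K p q * E q"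
  have R_norm_nonneg: "0 \<le> apply_norm I S R"
    by (simp add: apply_norm_def sum_nonneg)
  have "B E E = - (\<Sum>p\<in>I. E p * R p)"
    unfolding E_def R_def
    by (rule galerkin_energy_error_eq_residual[where B = B and A = A and U = U and W = W and F = F,
          OF assms(1) expand galerkin])
  also have "\<dots> \<le> sqrt ((\<Sum>p\<in>I. E p * R p)\<^sup>2)"
    by simp
  also have "\<dots> \<le> sqrt (?Q * (apply_norm I S R)\<^sup>2)"
    using inv_sqrt_Cauchy_Schwarz[OF assms(1) S symK] by (rule real_sqrt_le_mono)
  also have "\<dots> = sqrt ?Q * apply_norm I S R"
    using R_norm_nonneg by (simp add: real_sqrt_mult)
  finally have "B E E \<le> sqrt ?Q * apply_norm I S R" .
  moreover have "c * sqrt ?Q \<le> sqrt (B E E)"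
    using coercive unfolding E_def .
  ultimately have "sqrt (B E E) \<le> apply_norm I S R / c"
    using \<open>0 < c\<close> R_norm_nonneg by (intro sqrt_le_div_of_le_mult)
  then show ?thesis
    by (simp add: E_def R_def)
qed

theorem mainTheorem3:
  fixes D :: "'d::euclidean_space set"
    and f :: "'d \<Rightarrow> real"
    and L M N :: nat
    and \<sigma> :: "nat \<Rightarrow> real"
    and dd :: "nat \<Rightarrow> nat"
    and \<phi> :: "nat \<Rightarrow> 'd \<Rightarrow> real"
    and g\<phi> :: "nat \<Rightarrow> 'd \<Rightarrow> 'd"
    and a :: "'d \<Rightarrow> (nat \<Rightarrow> real) \<Rightarrow> real"
    and c :: real
    and U W :: "nat \<times> (nat \<Rightarrow> nat) \<Rightarrow> real"
    and S :: "nat \<times> (nat \<Rightarrow> nat) \<Rightarrow> nat \<times> (nat \<Rightarrow> nat) \<Rightarrow> real"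
  defines "I \<equiv> Idx N M dd"
    and "G \<equiv> gauss_sigma \<sigma> L"
    and "B \<equiv> (\<lambda>V V'. Bform D a (gauss_sigma \<sigma> L) (fe_grad N M dd \<sigma> L g\<phi> V) (fe_grad N M dd \<sigma> L g\<phi> V'))"
  assumes D_bounded: "bounded D" and D_open: "open D" and D_nonempty: "D \<noteq> {}"
    and f_meas: "f \<in> borel_measurable (lebesgue_on D)"
    and f_L2: "integrable (lebesgue_on D) (\<lambda>x. (f x)\<^sup>2)"
    and M_le_L: "M \<le> L"
    and dd_pos: "\<forall>m<M. 1 \<le> dd m"
    and sigma_ge: "\<forall>l<L. 1 \<le> \<sigma> l"
    and phi_H10: "\<forall>i<N. in_H10_with_grad D (\<phi> i) (g\<phi> i)"
    and phi_indep: "\<forall>cf. (AE x in lborel. (\<Sum>i<N. cf i * \<phi> i x) = 0) \<longrightarrow> (\<forall>i<N. cf i = 0)"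
    and a_poly: "poly_in_y L a"
    and B_integrable: "\<forall>p\<in>I. \<forall>q\<in>I. integrable (lebesgue_on D \<Otimes>\<^sub>M G)
          (\<lambda>(x, y). a x y * (g\<phi> (fst p) x \<bullet> g\<phi> (fst q) x) * Hmu \<sigma> L (snd p) y * Hmu \<sigma> L (snd q) y)"
    and B_bounded: "\<exists>C. \<forall>V V'. \<bar>B V V'\<bar> \<le> C * L2X_norm D G (fe_grad N M dd \<sigma> L g\<phi> V) * L2X_norm D G (fe_grad N M dd \<sigma> L g\<phi> V')"
    and c_pos: "0 < c"
    and coercive: "\<forall>V. c * L2X_norm D (gauss_std L) (fe_grad N M dd \<sigma> L g\<phi> V) \<le> sqrt (B V V)"
    and galerkin: "\<forall>V. B U V = rhs_int D f G (fe_fun N M dd \<sigma> L \<phi> V)"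
    and S_inv_sqrt: "is_inv_sqrt I (Hker D g\<phi> \<sigma> M) S"
  shows "sqrt (B (\<lambda>p. U p - W p) (\<lambda>p. U p - W p))
           \<le> (1 / c) * apply_norm I S
                 (\<lambda>p. B W (unit_tensor p) - rhs_int D f G (fe_fun N M dd \<sigma> L \<phi> (unit_tensor p)))"
proof -
  have fin_I: "finite I"
    unfolding I_def by (rule finite_Idx)
  have "D \<in> lmeasurable"
    using D_bounded D_open by (rule lmeasurable_open)
  then have D_sets: "D \<in> sets lebesgue" and sf_D: "sigma_finite_measure (lebesgue_on D)"
    by (auto intro: finite_measure.axioms(1)[OF finite_measure_lebesgue_on])
  have sf_G: "sigma_finite_measure G"
    unfolding G_def gauss_sigma_def using sigma_ge
    by (intro prob_space_imp_sigma_finite prob_space_PiM prob_space_normal_density) auto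
  have expand: "B V V' = (\<Sum>p\<in>I. \<Sum>q\<in>I. V p * V' q * B (unit_tensor p) (unit_tensor q))" for V V'
    unfolding B_def I_def G_def[symmetric]
    by (rule Bform_fe_grad_expansion[OF sf_D sf_G]) (use B_integrable in \<open>auto simp: I_def\<close>)
  have norm: "L2X_norm D (gauss_std L) (fe_grad N M dd \<sigma> L g\<phi> V)
      = sqrt (\<Sum>p\<in>I. \<Sum>q\<in>I. V p * Hker D g\<phi> \<sigma> M p q * V q)" for V
    unfolding I_def using phi_H10 D_sets M_le_L
    by (intro L2X_norm_gauss_std_fe_grad) (auto intro: integrable_inner_H10_grad)
  have sym_H: "\<forall>p\<in>I. \<forall>q\<in>I. Hker D g\<phi> \<sigma> M p q = Hker D g\<phi> \<sigma> M q p"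
    by (simp add: Hker_def Z0_def Zm_def inner_commute mult.commute)
  show ?thesis
    unfolding unit_tensor_def
    by (rule galerkin_energy_error_le_residual_norm[where B = B and U = U and W = W
          and F = "\<lambda>r. rhs_int D f G (fe_fun N M dd \<sigma> L \<phi> (\<lambda>q. if q = r then 1 else 0))",
          OF fin_I expand _ S_inv_sqrt sym_H c_pos])
       (use galerkin coercive norm in \<open>simp_all add: unit_tensor_def\<close>)
qed

end
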